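(* If $S$ is an IP-regular partial semigroup with only finitely many idempotent elements, then every nonprincipal strongly productive ultrafilter on $S$ is regular.
   Context: A partial semigroup is a set $P$ with a partially defined multiplication such that $(ab)c=a(bc)$ whenever both sides are defined. Any subset $X\subseteq P$ is a partial semigroup with the restricted operation ($ab$ defined in $X$ iff $a,b\in X$ and $ab$ is defined in $P$ and lies in $X$). An element $a$ is idempotent if $aa$ is defined and equals $a$; $E(P)$ is the set of idempotents. For a sequence $\vec{x}=(x_n)_{n\in\omega}$ in $P$ such that all products $\prod_{i\in a}x_i$ (increasing order of indices, $a$ finite nonempty subset of $\omega$) are defined, $\mathrm{FP}(\vec{x})$ is the set of these products and $\mathrm{FP}_k(\vec{x})=\mathrm{FP}((x_{n+k})_n)$. A subset of $P$ is an IP-set if it contains such an $\mathrm{FP}(\vec{x})$. An ultrafilter $p$ on $P$ is strongly productive if every $A\in p$ contains some $\mathrm{FP}(\vec{x})\in p$; a nonprincipal strongly productive $p$ is regular if some $B\in p$ has the property that whenever all finite products of $\vec{x}$ are defined and lie in $B$, the set $x_0\mathrm{FP}_1(\vec{x})$ is not in $p$. $P$ is strongly IP-regular if for every sequence $\vec{x}$ in $P$ all of whose finite products are defined, the set $x_0\mathrm{FP}_1(\vec{x})$ is not an IP-set (in $P$). $P$ is IP-regular if $P\setminus E(P)$ is a union of finitely many subsets each of which is strongly IP-regular (with the induced partial semigroup structure). *)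

theory Defs
  imports Main
begin

text \<open>A partial semigroup is given by a carrier P and a partial multiplication
  m :: 'a => 'a => 'a option (None = undefined), defined only on elements of P
  with values in P.\<close>

definition psemigroup :: "'a set \<Rightarrow> ('a \<Rightarrow> 'a \<Rightarrow> 'a option) \<Rightarrow> bool" where
  "psemigroup P m \<longleftrightarrow>
     (\<forall>a b c. m a b = Some c \<longrightarrow> a \<in> P \<and> b \<in> P \<and> c \<in> P) \<and>
     (\<forall>a b c ab bc x y. m a b = Some ab \<longrightarrow> m ab c = Some x \<longrightarrow>
                        m b c = Some bc \<longrightarrow> m a bc = Some y \<longrightarrow> x = y)"

definition restr :: "'a set \<Rightarrow> ('a \<Rightarrow> 'a \<Rightarrow> 'a option) \<Rightarrow> 'a \<Rightarrow> 'a \<Rightarrow> 'a option" where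
  "restr X m a b = (if a \<in> X \<and> b \<in> X \<and> (\<exists>c\<in>X. m a b = Some c) then m a b else None)"

definition idempotents :: "'a set \<Rightarrow> ('a \<Rightarrow> 'a \<Rightarrow> 'a option) \<Rightarrow> 'a set" where
  "idempotents P m = {a \<in> P. m a a = Some a}"

fun lprod :: "('a \<Rightarrow> 'a \<Rightarrow> 'a option) \<Rightarrow> 'a list \<Rightarrow> 'a option" where
  "lprod m [] = None"
| "lprod m (x # xs) = fold (\<lambda>y acc. Option.bind acc (\<lambda>a. m a y)) xs (Some x)"

definition fprod :: "('a \<Rightarrow> 'a \<Rightarrow> 'a option) \<Rightarrow> (nat \<Rightarrow> 'a) \<Rightarrow> nat set \<Rightarrow> 'a option" where
  "fprod m x F = lprod m (map x (sorted_list_of_set F))"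

definition FP_seq :: "'a set \<Rightarrow> ('a \<Rightarrow> 'a \<Rightarrow> 'a option) \<Rightarrow> (nat \<Rightarrow> 'a) \<Rightarrow> bool" where
  "FP_seq P m x \<longleftrightarrow> (\<forall>n. x n \<in> P) \<and>
     (\<forall>F. finite F \<and> F \<noteq> {} \<longrightarrow> fprod m x F \<noteq> None)"

definition FP :: "('a \<Rightarrow> 'a \<Rightarrow> 'a option) \<Rightarrow> (nat \<Rightarrow> 'a) \<Rightarrow> 'a set" where
  "FP m x = {c. \<exists>F. finite F \<and> F \<noteq> {} \<and> fprod m x F = Some c}"

definition FPk :: "('a \<Rightarrow> 'a \<Rightarrow> 'a option) \<Rightarrow> nat \<Rightarrow> (nat \<Rightarrow> 'a) \<Rightarrow> 'a set" where
  "FPk m k x = FP m (\<lambda>n. x (n + k))"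

definition x0FP1 :: "('a \<Rightarrow> 'a \<Rightarrow> 'a option) \<Rightarrow> (nat \<Rightarrow> 'a) \<Rightarrow> 'a set" where
  "x0FP1 m x = {c. \<exists>d \<in> FPk m 1 x. m (x 0) d = Some c}"

definition IP_set :: "'a set \<Rightarrow> ('a \<Rightarrow> 'a \<Rightarrow> 'a option) \<Rightarrow> 'a set \<Rightarrow> bool" where
  "IP_set P m A \<longleftrightarrow> (\<exists>x. FP_seq P m x \<and> FP m x \<subseteq> A)"

definition ultrafilter_on :: "'a set \<Rightarrow> 'a set set \<Rightarrow> bool" where
  "ultrafilter_on P U \<longleftrightarrow> U \<subseteq> Pow P \<and> P \<in> U \<and> {} \<notin> U \<and>
     (\<forall>A\<in>U. \<forall>B\<in>U. A \<inter> B \<in> U) \<and>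
     (\<forall>A\<in>U. \<forall>B. A \<subseteq> B \<and> B \<subseteq> P \<longrightarrow> B \<in> U) \<and>
     (\<forall>A. A \<subseteq> P \<longrightarrow> A \<in> U \<or> P - A \<in> U)"

definition nonprincipal :: "'a set \<Rightarrow> 'a set set \<Rightarrow> bool" where
  "nonprincipal P U \<longleftrightarrow> (\<forall>a\<in>P. {a} \<notin> U)"

definition strongly_productive :: "'a set \<Rightarrow> ('a \<Rightarrow> 'a \<Rightarrow> 'a option) \<Rightarrow> 'a set set \<Rightarrow> bool" where
  "strongly_productive P m U \<longleftrightarrow>
     (\<forall>A\<in>U. \<exists>x. FP_seq P m x \<and> FP m x \<subseteq> A \<and> FP m x \<in> U)"

definition regular_uf :: "'a set \<Rightarrow> ('a \<Rightarrow> 'a \<Rightarrow> 'a option) \<Rightarrow> 'a set set \<Rightarrow> bool" where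
  "regular_uf P m U \<longleftrightarrow> nonprincipal P U \<and> strongly_productive P m U \<and>
     (\<exists>B\<in>U. \<forall>x. FP_seq P m x \<and> FP m x \<subseteq> B \<longrightarrow> x0FP1 m x \<notin> U)"

definition strongly_IP_regular :: "'a set \<Rightarrow> ('a \<Rightarrow> 'a \<Rightarrow> 'a option) \<Rightarrow> bool" where
  "strongly_IP_regular P m \<longleftrightarrow> (\<forall>x. FP_seq P m x \<longrightarrow> \<not> IP_set P m (x0FP1 m x))"

definition IP_regular :: "'a set \<Rightarrow> ('a \<Rightarrow> 'a \<Rightarrow> 'a option) \<Rightarrow> bool" where
  "IP_regular P m \<longleftrightarrow> (\<exists>Xs. finite Xs \<and> \<Union>Xs = P - idempotents P m \<and>
     (\<forall>X\<in>Xs. strongly_IP_regular X (restr X m)))"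

end

theory Submission
  imports Defs
begin

text \<open>A finite set of idempotents cannot belong to a nonprincipal ultrafilter
  \<open>p\<close>, so \<open>p\<close> contains the non-idempotents and hence one of the finitely many strongly
  IP-regular pieces \<open>X\<close> covering them. This \<open>X\<close> witnesses regularity: if \<open>FP(x) \<subseteq> X\<close> and
  \<open>x\<^sub>0 FP\<^sub>1(x) \<in> p\<close>, strong productivity yields an \<open>FP(y) \<subseteq> x\<^sub>0 FP\<^sub>1(x) \<inter> X\<close>, and since
  all products involved stay in \<open>X\<close> they are products of the induced partial semigroup on
  \<open>X\<close>, contradicting strong IP-regularity of \<open>X\<close>.\<close>

lemma sorted_list_of_set_set_if_sorted_distinct:
  fixes xs :: "nat list"
  assumes "sorted xs" "distinct xs"
  shows "sorted_list_of_set (set xs) = xs"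
  using assms by (simp add: sorted_list_of_set_sort_remdups distinct_remdups_id sorted_sort_id)

lemma lprod_snoc:
  "xs \<noteq> [] \<Longrightarrow> lprod m (xs @ [y]) = Option.bind (lprod m xs) (\<lambda>a. m a y)"
  by (cases xs) auto

lemma fprod_singleton: "fprod m x {n} = Some (x n)"
  by (simp add: fprod_def)

lemma term_in_FP: "x n \<in> FP m x"
  unfolding FP_def by (intro CollectI exI[of _ "{n}"]) (simp add: fprod_singleton)

lemma fprod_shift: "fprod m (\<lambda>n. x (n + k)) F = fprod m x ((\<lambda>n. n + k) ` F)"
proof (cases "finite F")
  case False
  then have "infinite ((\<lambda>n. n + k) ` F)"
    using finite_imageD[of "\<lambda>n. n + k" F] by (auto simp: inj_on_def)
  with False show ?thesis unfolding fprod_def by simp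
next
  case True
  define L where "L = sorted_list_of_set F"
  have "sorted (map (\<lambda>n. n + k) L)" "distinct (map (\<lambda>n. n + k) L)"
    by (auto simp: L_def sorted_map distinct_map inj_on_def)
  moreover have "set (map (\<lambda>n. n + k) L) = (\<lambda>n. n + k) ` F"
    using True by (simp add: L_def)
  ultimately have "sorted_list_of_set ((\<lambda>n. n + k) ` F) = map (\<lambda>n. n + k) L"
    by (metis sorted_list_of_set_set_if_sorted_distinct)
  then show ?thesis unfolding fprod_def L_def by (simp add: comp_def)
qed

lemma FP_shift_subset: "FP m (\<lambda>n. x (n + k)) \<subseteq> FP m x"
proof
  fix c assume "c \<in> FP m (\<lambda>n. x (n + k))"
  then obtain F where F: "finite F" "F \<noteq> {}" "fprod m (\<lambda>n. x (n + k)) F = Some c"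
    unfolding FP_def by blast
  then have "finite ((\<lambda>n. n + k) ` F)" "(\<lambda>n. n + k) ` F \<noteq> {}"
    "fprod m x ((\<lambda>n. n + k) ` F) = Some c"
    by (simp_all add: fprod_shift)
  then show "c \<in> FP m x" unfolding FP_def by blast
qed

lemma FP_seq_shift:
  assumes "FP_seq P m x"
  shows "FP_seq P m (\<lambda>n. x (n + k))"
  unfolding FP_seq_def
proof (intro conjI allI impI)
  fix n show "x (n + k) \<in> P" using assms unfolding FP_seq_def by blast
next
  fix F :: "nat set" assume "finite F \<and> F \<noteq> {}"
  then have "fprod m x ((\<lambda>n. n + k) ` F) \<noteq> None" using assms unfolding FP_seq_def by blast
  then show "fprod m (\<lambda>n. x (n + k)) F \<noteq> None" by (simp add: fprod_shift)
qed

lemma lprod_restr: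
  assumes "set xs \<subseteq> X"
    and "\<And>k. 1 \<le> k \<Longrightarrow> k \<le> length xs \<Longrightarrow> \<exists>c\<in>X. lprod m (take k xs) = Some c"
  shows "lprod (restr X m) xs = lprod m xs"
  using assms
proof (induction xs rule: rev_induct)
  case (snoc y xs)
  show ?case
  proof (cases "xs = []")
    case False
    have IH: "lprod (restr X m) xs = lprod m xs"
    proof (rule snoc.IH)
      show "set xs \<subseteq> X" using snoc.prems(1) by simp
    next
      fix k assume "1 \<le> k" "k \<le> length xs"
      then show "\<exists>c\<in>X. lprod m (take k xs) = Some c" using snoc.prems(2)[of k] by simp
    qed
    obtain a where a: "a \<in> X" "lprod m xs = Some a"
      using snoc.prems(2)[of "length xs"] False by (auto simp: Suc_le_eq)
    obtain c where c: "c \<in> X" "m a y = Some c"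
      using snoc.prems(2)[of "Suc (length xs)"] a lprod_snoc[OF False, of m y] by auto
    have "restr X m a y = m a y"
      using a c snoc.prems(1) by (auto simp: restr_def)
    then show ?thesis using IH lprod_snoc[OF False] a by simp
  qed simp
qed simp

lemma fprod_restr:
  assumes "FP_seq P m x" "FP m x \<subseteq> X"
  shows "fprod (restr X m) x F = fprod m x F"
proof (cases "finite F \<and> F \<noteq> {}")
  case True
  define L where "L = sorted_list_of_set F"
  have "lprod (restr X m) (map x L) = lprod m (map x L)"
  proof (rule lprod_restr)
    show "set (map x L) \<subseteq> X" using assms(2) term_in_FP by fastforce
  next
    fix k assume k: "1 \<le> k" "k \<le> length (map x L)"
    define G where "G = set (take k L)"
    \<comment> \<open>the prefixes of the product over \<open>F\<close> are the products over initial segments of \<open>F\<close>\<close>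
    have "sorted_list_of_set G = take k L"
      unfolding G_def L_def
      by (rule sorted_list_of_set_set_if_sorted_distinct) (auto simp: sorted_wrt_take)
    moreover have "finite G" "G \<noteq> {}" using k True by (auto simp: G_def L_def)
    moreover obtain c where c: "fprod m x G = Some c"
      using assms(1) \<open>finite G\<close> \<open>G \<noteq> {}\<close> unfolding FP_seq_def by auto
    ultimately have "c \<in> FP m x" unfolding FP_def by blast
    with c \<open>sorted_list_of_set G = take k L\<close> show "\<exists>c\<in>X. lprod m (take k (map x L)) = Some c"
      using assms(2) by (auto simp: fprod_def take_map)
  qed
  then show ?thesis by (simp add: fprod_def L_def)
qed (auto simp: fprod_def)

lemma FP_restr:
  assumes "FP_seq P m x" "FP m x \<subseteq> X"
  shows "FP (restr X m) x = FP m x"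
  using fprod_restr[OF assms] unfolding FP_def by simp

lemma FP_seq_restr:
  assumes "FP_seq P m x" "FP m x \<subseteq> X"
  shows "FP_seq X (restr X m) x"
  using assms fprod_restr[OF assms] term_in_FP unfolding FP_seq_def by fastforce

lemma x0FP1_restr:
  assumes "FP_seq P m x" "FP m x \<subseteq> X"
  shows "x0FP1 m x \<inter> X \<subseteq> x0FP1 (restr X m) x"
proof
  fix c assume c: "c \<in> x0FP1 m x \<inter> X"
  then obtain d where d: "d \<in> FP m (\<lambda>n. x (n + 1))" "m (x 0) d = Some c"
    unfolding x0FP1_def FPk_def by auto
  have tail: "FP_seq P m (\<lambda>n. x (n + 1))" "FP m (\<lambda>n. x (n + 1)) \<subseteq> X"
    by (rule FP_seq_shift[OF assms(1)], rule order_trans[OF FP_shift_subset assms(2)])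
  have "restr X m (x 0) d = Some c"
    using d c tail(2) assms(2) term_in_FP[of x 0 m] by (auto simp: restr_def)
  with d show "c \<in> x0FP1 (restr X m) x"
    unfolding x0FP1_def FPk_def FP_restr[OF tail] by auto
qed

lemma ultrafilter_on_empty: "ultrafilter_on S U \<Longrightarrow> {} \<notin> U"
  unfolding ultrafilter_on_def by (elim conjE)

lemma ultrafilter_on_Int: "ultrafilter_on S U \<Longrightarrow> A \<in> U \<Longrightarrow> B \<in> U \<Longrightarrow> A \<inter> B \<in> U"
  unfolding ultrafilter_on_def by (elim conjE) blast

lemma ultrafilter_on_mono:
  "ultrafilter_on S U \<Longrightarrow> A \<in> U \<Longrightarrow> A \<subseteq> B \<Longrightarrow> B \<subseteq> S \<Longrightarrow> B \<in> U"
  unfolding ultrafilter_on_def by (elim conjE) blast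

lemma ultrafilter_on_Diff: "ultrafilter_on S U \<Longrightarrow> A \<subseteq> S \<Longrightarrow> A \<notin> U \<Longrightarrow> S - A \<in> U"
  unfolding ultrafilter_on_def by (elim conjE) blast

lemma finite_notin_nonprincipal_ultrafilter:
  assumes "ultrafilter_on S U" "nonprincipal S U" "finite F" "F \<subseteq> S"
  shows "F \<notin> U"
  using assms(3,4)
proof (induction F rule: finite_induct)
  case empty
  then show ?case using ultrafilter_on_empty[OF assms(1)] by simp
next
  case (insert a F)
  have "{a} \<notin> U" using assms(2) insert.prems unfolding nonprincipal_def by simp
  then have "S - {a} \<in> U" using ultrafilter_on_Diff[OF assms(1)] insert.prems by simp
  show ?case
  proof
    assume "insert a F \<in> U"
    then have "insert a F \<inter> (S - {a}) \<in> U"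
      using \<open>S - {a} \<in> U\<close> by (rule ultrafilter_on_Int[OF assms(1)])
    then have "F \<in> U" by (rule ultrafilter_on_mono[OF assms(1)]) (use insert.prems in auto)
    with insert show False by simp
  qed
qed

lemma ultrafilter_on_finite_Union:
  assumes "ultrafilter_on S U" "finite Xs" "\<Union>Xs \<subseteq> S" "\<Union>Xs \<in> U"
  shows "\<exists>X\<in>Xs. X \<in> U"
  using assms(2-4)
proof (induction Xs rule: finite_induct)
  case empty
  then show ?case using ultrafilter_on_empty[OF assms(1)] by simp
next
  case (insert X Xs)
  show ?case
  proof (cases "X \<in> U")
    case False
    then have "S - X \<in> U" using ultrafilter_on_Diff[OF assms(1)] insert.prems by simp
    with insert.prems have "\<Union>(insert X Xs) \<inter> (S - X) \<in> U"
      by (intro ultrafilter_on_Int[OF assms(1)])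
    then have "\<Union>Xs \<in> U" by (rule ultrafilter_on_mono[OF assms(1)]) (use insert.prems in auto)
    with insert show ?thesis by simp
  qed simp
qed

lemma ultrafilter_contains_strongly_IP_regular_piece:
  assumes "IP_regular S m" "finite (idempotents S m)"
    and "ultrafilter_on S U" "nonprincipal S U"
  obtains X where "X \<in> U" "strongly_IP_regular X (restr X m)"
proof -
  obtain Xs where Xs: "finite Xs" "\<Union>Xs = S - idempotents S m"
    "\<forall>X\<in>Xs. strongly_IP_regular X (restr X m)"
    using assms(1) unfolding IP_regular_def by blast
  have "idempotents S m \<subseteq> S" unfolding idempotents_def by blast
  then have "S - idempotents S m \<in> U"
    using finite_notin_nonprincipal_ultrafilter[OF assms(3,4,2)] ultrafilter_on_Diff[OF assms(3)]
    by blast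
  then show ?thesis
    using ultrafilter_on_finite_Union[OF assms(3) Xs(1)] Xs(2,3) that by auto
qed

lemma x0FP1_notin_ultrafilter:
  assumes "ultrafilter_on S U" "strongly_productive S m U"
    and "X \<in> U" "strongly_IP_regular X (restr X m)"
    and "FP_seq S m x" "FP m x \<subseteq> X"
  shows "x0FP1 m x \<notin> U"
proof
  assume "x0FP1 m x \<in> U"
  then have "x0FP1 m x \<inter> X \<in> U" using ultrafilter_on_Int[OF assms(1) _ assms(3)] by blast
  then obtain y where y: "FP_seq S m y" "FP m y \<subseteq> x0FP1 m x \<inter> X"
    using assms(2) unfolding strongly_productive_def by blast
  have yX: "FP m y \<subseteq> X" using y(2) by blast
  have "FP (restr X m) y \<subseteq> x0FP1 (restr X m) x"
    using FP_restr[OF y(1) yX] y(2) x0FP1_restr[OF assms(5,6)] by auto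
  then have "IP_set X (restr X m) (x0FP1 (restr X m) x)"
    using FP_seq_restr[OF y(1) yX] unfolding IP_set_def by blast
  moreover have "\<not> IP_set X (restr X m) (x0FP1 (restr X m) x)"
    using assms(4) FP_seq_restr[OF assms(5,6)] by (simp add: strongly_IP_regular_def)
  ultimately show False by contradiction
qed

theorem mainTheorem4:
  fixes S :: "'a set" and m :: "'a \<Rightarrow> 'a \<Rightarrow> 'a option" and U :: "'a set set"
  assumes "psemigroup S m"
    and "IP_regular S m"
    and "finite (idempotents S m)"
    and "ultrafilter_on S U"
    and "nonprincipal S U"
    and "strongly_productive S m U"
  shows "regular_uf S m U"
proof -
  obtain X where "X \<in> U" "strongly_IP_regular X (restr X m)"
    using ultrafilter_contains_strongly_IP_regular_piece[OF assms(2-5)] .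
  then have "\<forall>x. FP_seq S m x \<and> FP m x \<subseteq> X \<longrightarrow> x0FP1 m x \<notin> U"
    using x0FP1_notin_ultrafilter[OF assms(4,6)] by blast
  with \<open>X \<in> U\<close> show ?thesis
    using assms(5,6) unfolding regular_uf_def by blast
qed

end
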